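(* Let $\gamma\in(0,2)$, $d\ge1$ and $G\in\mathscr S^d_{\gamma,0}$. Then there exist $H^G_2\in L^1(\mathbb R^d)$ and a constant $C_2=C_2(G)>0$ such that for all $\hat u\in\mathbb R^d$, $$\sup_{s\in[0,T]}|\Delta^{\gamma/2}_\star G_s(\hat u)|\le H^G_2(\hat u)\le C_2\big(1+|u_d|^{-\gamma/2}\big)$$ (the right-hand side being $+\infty$ when $u_d=0$).
   Context: Fix $T>0$; $c_\gamma>0$ with $\sum_{\hat z\ne0}c_\gamma|\hat z|^{-d-\gamma}=1$. Write $\hat u=(\hat u_\star,u_d)$, $\mathbb R^{d\star}_\pm=\mathbb R^{d-1}\times\{\pm u_d>0\}$. For open $\mathcal O$: $\Delta^{\gamma/2}_{\mathcal O}G(\hat u)=\mathbb 1_{\mathcal O}(\hat u)c_\gamma\lim_{\varepsilon\to0^+}\int_{\mathcal O\cap\{|\hat v-\hat u|\ge\varepsilon\}}\frac{G(\hat u)-G(\hat v)}{|\hat v-\hat u|^{d+\gamma}}\mathrm d\hat v$, and $\Delta^{\gamma/2}_\star=\Delta^{\gamma/2}_{\mathbb R^{d\star}_-}+\Delta^{\gamma/2}_{\mathbb R^{d\star}_+}$. For $k\in\mathbb N$, $\mathscr S^k(\mathbb R^d)$ is the set of continuous $G:[0,\infty)\times\mathbb R^d\to\mathbb R$ whose spatial partial derivatives up to order $k$ exist and are continuous, with $\sup_{(s,\hat u)\in[0,T]\times\mathbb R^d}|\hat u|^r[G_s]_j(\hat u)<\infty$ for all $r\in\mathbb N$, $j\le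 k$, where $[G_s]_j=|G_s|+\sum_{m=1}^j\sum_{i_1,\dots,i_m}|\partial_{i_1}\cdots\partial_{i_m}G_s|$. $\mathscr S^k_c(\mathbb R^d)$: those vanishing, for all $s\in[0,T]$, outside some compact set. $\mathscr S^d_\gamma=\mathscr S^2_c(\mathbb R^d)$ if $\gamma\in(0,1]$ or $d\ge2$, $\mathscr S^2(\mathbb R)$ if $d=1,\gamma\in(1,2)$. $\mathscr S^d_{\gamma,0}$: functions $G:[0,T]\times\mathbb R^d\to\mathbb R$ for which there are $G^\pm\in\mathscr S^d_\gamma$ with $G_s(\hat u)=\mathbb 1_{u_d<0}G^-_s(\hat u)+\mathbb 1_{u_d\ge0}G^+_s(\hat u)$ for all $s,\hat u$. *)

theory Defs
  imports "HOL-Analysis.Analysis"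
begin

text \<open>Space R^d is modelled as real^'n with d = CARD('n); the distinguished
  ("last") coordinate u_d is a fixed index k :: 'n.\<close>

definition c_gamma :: "real \<Rightarrow> ('n::finite) itself \<Rightarrow> real" where
  "c_gamma \<gamma> _ = inverse (infsum (\<lambda>z::real^'n. norm z powr (- (real CARD('n) + \<gamma>)))
      {z. (\<forall>i. z $ i \<in> \<int>) \<and> z \<noteq> 0})"

definition pd :: "'n::finite \<Rightarrow> (real^'n \<Rightarrow> real) \<Rightarrow> real^'n \<Rightarrow> real" where
  "pd i f u = deriv (\<lambda>t. f (u + t *\<^sub>R axis i 1)) 0"

fun pdl :: "'n::finite list \<Rightarrow> (real^'n \<Rightarrow> real) \<Rightarrow> real^'n \<Rightarrow> real" where
  "pdl [] f = f"
| "pdl (i # is) f = pd i (pdl is f)"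

definition bracket :: "nat \<Rightarrow> (real^'n::finite \<Rightarrow> real) \<Rightarrow> real^'n \<Rightarrow> real" where
  "bracket j f u = (\<Sum>m\<le>j. \<Sum>is\<in>{is :: 'n list. length is = m}. \<bar>pdl is f u\<bar>)"

definition S_k :: "real \<Rightarrow> nat \<Rightarrow> (real \<Rightarrow> real^'n::finite \<Rightarrow> real) set" where
  "S_k T k = {G.
     continuous_on ({0..} \<times> UNIV) (\<lambda>(s,u). G s u)
   \<and> (\<forall>is i s u. length is < k \<and> s \<ge> 0 \<longrightarrow>
          (\<lambda>t. pdl is (G s) (u + t *\<^sub>R axis i 1)) differentiable (at 0))
   \<and> (\<forall>is. length is \<le> k \<longrightarrow> continuous_on ({0..} \<times> UNIV) (\<lambda>(s,u). pdl is (G s) u))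
   \<and> (\<forall>r::nat. \<forall>j\<le>k. bdd_above ((\<lambda>(s,u). norm u ^ r * bracket j (G s) u) ` ({0..T} \<times> UNIV)))}"

definition S_k_c :: "real \<Rightarrow> nat \<Rightarrow> (real \<Rightarrow> real^'n::finite \<Rightarrow> real) set" where
  "S_k_c T k = {G \<in> S_k T k. \<exists>K. compact K \<and> (\<forall>s\<in>{0..T}. \<forall>u. u \<notin> K \<longrightarrow> G s u = 0)}"

definition S_gamma :: "real \<Rightarrow> real \<Rightarrow> (real \<Rightarrow> real^'n::finite \<Rightarrow> real) set" where
  "S_gamma T \<gamma> = (if \<gamma> \<le> 1 \<or> CARD('n) \<ge> 2 then S_k_c T 2 else S_k T 2)"

definition S_gamma_0 :: "real \<Rightarrow> real \<Rightarrow> 'n::finite \<Rightarrow> (real \<Rightarrow> real^'n \<Rightarrow> real) set" where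
  "S_gamma_0 T \<gamma> k = {G. \<exists>Gm Gp. Gm \<in> S_gamma T \<gamma> \<and> Gp \<in> S_gamma T \<gamma> \<and>
      (\<forall>s\<in>{0..T}. \<forall>u. G s u = (if u $ k < 0 then Gm s u else Gp s u))}"

definition reg_frac_lap :: "real \<Rightarrow> (real^'n::finite) set \<Rightarrow> (real^'n \<Rightarrow> real) \<Rightarrow> real^'n \<Rightarrow> real" where
  "reg_frac_lap \<gamma> D g u = indicator D u * c_gamma \<gamma> TYPE('n) *
     Lim (at_right 0) (\<lambda>\<epsilon>. set_lebesgue_integral lborel (D \<inter> {v. norm (v - u) \<ge> \<epsilon>})
         (\<lambda>v. (g u - g v) / norm (v - u) powr (real CARD('n) + \<gamma>)))"

definition star_frac_lap :: "real \<Rightarrow> 'n::finite \<Rightarrow> (real^'n \<Rightarrow> real) \<Rightarrow> real^'n \<Rightarrow> real" where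
  "star_frac_lap \<gamma> k g u = reg_frac_lap \<gamma> {v. v $ k < 0} g u + reg_frac_lap \<gamma> {v. v $ k > 0} g u"

end

theory Submission
  imports Defs
begin

(*
  Fix s and u with u_d <> 0.  On the side of u, G_s agrees with a function g that is C^2
  along the coordinate axes, with g and its first two partial derivatives bounded by
  B (1 + |y|)^(-N).  With rho = min 1 |u_d| the ball of radius rho around u stays in the
  open half-space of u, so the truncated integrals over {|v - u| >= eps} split into a part
  over |h| >= rho, which converges absolutely, and a part over eps <= |h| < rho.
  Symmetrising h -> -h turns the latter into the second difference
  2 g(u) - g(u+h) - g(u-h) = O(|h|^2) against |h|^(-d-gamma), integrable near 0 since
  gamma < 2, so the principal value exists by dominated convergence.  All pointwise bounds
  carry the factor (1 + |u|)^(-d-gamma) (for the far tail via Peetre's inequality), and the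
  only loss at the boundary is the factor rho^(-gamma/2) <= 1 + |u_d|^(-gamma/2) in the
  first-order estimate on rho <= |h| < 1.  Finally (1 + |u|)^(-d-gamma) is dominated by the
  integrable product of the (1 + |u_i|)^(-(d+gamma)/d), and the extra factor
  1 + |u_d|^(-gamma/2) keeps it integrable because gamma/2 < 1.
*)

section \<open>Integrability of power weights\<close>

lemma integrable_lborel_of_has_integral_nonneg:
  fixes f :: "'a::euclidean_space \<Rightarrow> real"
  assumes [measurable]: "f \<in> borel_measurable borel" "S \<in> sets borel"
    and I: "(f has_integral I) S" and nonneg: "\<And>x. x \<in> S \<Longrightarrow> 0 \<le> f x"
  shows "integrable lborel (\<lambda>x. indicator S x * f x)"
proof (rule integrableI_nonneg)
  show "(\<lambda>x. indicator S x * f x) \<in> borel_measurable lborel" by measurable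
  show "AE x in lborel. 0 \<le> indicator S x * f x" by (auto simp: indicator_def nonneg)
  have "(\<lambda>x. indicator S x * f x) = (\<lambda>x. if x \<in> S then f x else 0)"
    by (auto simp: indicator_def)
  then have "((\<lambda>x. indicator S x * f x) has_integral I) UNIV"
    using I by (simp add: has_integral_restrict_UNIV)
  then have "integral\<^sup>N lborel (\<lambda>x. indicator S x * f x) = I"
    by (intro nn_integral_has_integral_lborel) (auto simp: indicator_def nonneg)
  then show "(\<integral>\<^sup>+x. ennreal (indicator S x * f x) \<partial>lborel) < \<infinity>" by simp
qed

lemma integrable_even_lborel:
  fixes f :: "real \<Rightarrow> real"
  assumes [measurable]: "f \<in> borel_measurable borel" and even: "\<And>x. f (- x) = f x"
    and int: "integrable lborel (\<lambda>x. indicator {0..} x * f x)"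
  shows "integrable lborel f"
proof (rule Bochner_Integration.integrable_bound)
  let ?g = "\<lambda>x. indicator {0..} x * f x"
  have "integrable lborel (\<lambda>x. ?g (0 + (-1) * x))"
    by (rule lborel_integrable_real_affine[OF int]) simp
  then show "integrable lborel (\<lambda>x. \<bar>?g x\<bar> + \<bar>?g (- x)\<bar>)" using int by simp
  show "AE x in lborel. norm (f x) \<le> norm (\<bar>?g x\<bar> + \<bar>?g (- x)\<bar>)"
    by (auto simp: indicator_def even)
qed measurable

lemma integrable_one_plus_abs_powr:
  fixes q :: real assumes "1 < q"
  shows "integrable lborel (\<lambda>x::real. (1 + \<bar>x\<bar>) powr -q)"
proof (rule integrable_even_lborel)
  have "integrable lborel (\<lambda>x::real. indicator {1..} x * x powr -q)"
    by (rule integrable_lborel_of_has_integral_nonneg[OF _ _ has_integral_powr_to_inf])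
       (use assms in auto)
  then have "integrable lborel (\<lambda>x. indicator {1..} (1 + 1 * x) * (1 + 1 * x) powr -q)"
    by (rule lborel_integrable_real_affine) simp
  moreover have "(\<lambda>x. indicator {1..} (1 + 1 * x) * (1 + 1 * x) powr -q)
      = (\<lambda>x::real. indicator {0..} x * (1 + \<bar>x\<bar>) powr -q)"
    by (auto simp: indicator_def)
  ultimately show "integrable lborel (\<lambda>x::real. indicator {0..} x * (1 + \<bar>x\<bar>) powr -q)"
    by simp
qed auto

lemma integrable_abs_powr_near_0:
  fixes c :: real assumes "0 \<le> c" "c < 1"
  shows "integrable lborel (\<lambda>x::real. indicator {-1..1} x * \<bar>x\<bar> powr -c)"
proof (rule integrable_even_lborel)
  have "integrable lborel (\<lambda>x::real. indicator {0..1} x * x powr -c)"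
    by (rule integrable_lborel_of_has_integral_nonneg[OF _ _ has_integral_powr_from_0])
       (use assms in auto)
  moreover have "(\<lambda>x::real. indicator {0..1} x * x powr -c)
      = (\<lambda>x. indicator {0..} x * (indicator {-1..1} x * \<bar>x\<bar> powr -c))"
    by (auto simp: indicator_def)
  ultimately show "integrable lborel (\<lambda>x::real. indicator {0..} x * (indicator {-1..1} x * \<bar>x\<bar> powr -c))"
    by simp
qed (auto simp: indicator_def)

lemma one_plus_abs_powr_neg_le_1: "0 \<le> q \<Longrightarrow> (1 + \<bar>x\<bar>) powr -q \<le> (1::real)"
  using powr_mono[of "-q" 0 "1 + \<bar>x\<bar>"] abs_ge_zero[of x] by (auto split: if_split_asm)

lemma integrable_one_plus_abs_powr_mult:
  fixes q c :: real assumes q: "1 < q" and c: "0 \<le> c" "c < 1"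
  shows "integrable lborel (\<lambda>x::real. (1 + \<bar>x\<bar>) powr -q * (1 + \<bar>x\<bar> powr -c))"
proof (rule Bochner_Integration.integrable_bound)
  show "integrable lborel (\<lambda>x::real. 2 * (1 + \<bar>x\<bar>) powr -q + indicator {-1..1} x * \<bar>x\<bar> powr -c)"
    using integrable_one_plus_abs_powr[OF q] integrable_abs_powr_near_0[OF c] by simp
  have "(1 + \<bar>x\<bar>) powr -q * (1 + \<bar>x\<bar> powr -c) \<le> 2 * (1 + \<bar>x\<bar>) powr -q + indicator {-1..1} x * \<bar>x\<bar> powr -c"
    for x :: real
  proof -
    show ?thesis
    proof (cases "\<bar>x\<bar> \<le> 1")
      case True
      have "(1 + \<bar>x\<bar>) powr -q * \<bar>x\<bar> powr -c \<le> \<bar>x\<bar> powr -c"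
        using q by (intro mult_left_le_one_le one_plus_abs_powr_neg_le_1) auto
      then show ?thesis using True by (simp add: indicator_def abs_le_iff distrib_left add_increasing)
    next
      case False
      then have "\<bar>x\<bar> powr -c \<le> 1"
        using c powr_mono[of "-c" 0 "\<bar>x\<bar>"] by (auto split: if_split_asm)
      then have "(1 + \<bar>x\<bar>) powr -q * \<bar>x\<bar> powr -c \<le> (1 + \<bar>x\<bar>) powr -q"
        by (intro mult_left_le) auto
      moreover have "indicator {-1..1} x = (0::real)" using False by (auto simp: indicator_def)
      ultimately show ?thesis by (simp add: distrib_left)
    qed
  qed
  then show "AE x in lborel. norm ((1 + \<bar>x\<bar>) powr -q * (1 + \<bar>x\<bar> powr -c))
      \<le> norm (2 * (1 + \<bar>x\<bar>) powr -q + indicator {-1..1} x * \<bar>x\<bar> powr -c)"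
    by (intro AE_I2) (simp add: order_trans[OF _ abs_ge_self])
qed measurable

lemma integrable_prod_components:
  fixes f :: "'n::finite \<Rightarrow> real \<Rightarrow> real"
  assumes int: "\<And>i. integrable lborel (f i)"
  shows "integrable lborel (\<lambda>x::real^'n. \<Prod>i\<in>UNIV. f i (x$i))"
proof -
  interpret finite_product_sigma_finite "\<lambda>_. lborel" "Basis :: (real^'n) set" by standard simp
  have [measurable]: "f i \<in> borel_measurable borel" for i
    using borel_measurable_integrable[OF int[of i]] by simp
  have Basis_eq: "(Basis :: (real^'n) set) = range (\<lambda>i. axis i 1)"
    by (auto simp: Basis_vec_def)
  have inj: "inj (\<lambda>i::'n. axis i (1::real))"
    by (auto simp: inj_on_def axis_eq_axis)
  have component: "(\<Sum>b\<in>(Basis :: (real^'n) set). \<phi> b *\<^sub>R b) $ i = \<phi> (axis i 1)" for \<phi> i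
  proof -
    have "(\<Sum>j\<in>UNIV. \<phi> (axis j 1) * axis j 1 $ i) = (\<Sum>j\<in>UNIV. if j = i then \<phi> (axis j 1) else 0)"
      by (rule sum.cong) (auto simp: axis_def)
    then show ?thesis
      by (simp add: Basis_eq sum.reindex[OF inj] sum_component)
  qed
  have "integrable (\<Pi>\<^sub>M b\<in>Basis. lborel) (\<lambda>\<phi>. \<Prod>b\<in>(Basis :: (real^'n) set). f (axis_index b) (\<phi> b))"
    by (rule product_integrable_prod) (auto intro: int)
  moreover have "(\<Prod>b\<in>(Basis :: (real^'n) set). f (axis_index b) (\<phi> b))
      = (\<Prod>i\<in>UNIV. f i ((\<Sum>b\<in>Basis. \<phi> b *\<^sub>R b) $ i))" for \<phi>
    by (simp only: component) (simp add: Basis_eq prod.reindex[OF inj])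
  ultimately have "integrable (distr (\<Pi>\<^sub>M b\<in>Basis. lborel) borel (\<lambda>\<phi>. \<Sum>b\<in>Basis. \<phi> b *\<^sub>R b))
      (\<lambda>x::real^'n. \<Prod>i\<in>UNIV. f i (x$i))"
    by (subst integrable_distr_eq) auto
  then show ?thesis by (simp add: lborel_eq[symmetric])
qed

lemma AE_lborel_components_nonzero: "AE x in (lborel :: (real^'n::finite) measure). \<forall>i. x$i \<noteq> 0"
proof -
  have "AE x in (lborel :: (real^'n) measure). x \<bullet> axis i 1 \<noteq> 0" for i
    by (rule AE_lborel_inner_neq) (auto simp: Basis_vec_def)
  then have "\<forall>i\<in>UNIV. AE x in (lborel :: (real^'n) measure). x $ i \<noteq> 0"
    by (simp add: cart_eq_inner_axis)
  then show ?thesis by (subst (asm) AE_finite_all[symmetric]) auto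
qed

lemma powr_eq_prod_powr:
  fixes x r :: real assumes "0 < x"
  shows "x powr r = (\<Prod>i\<in>(UNIV::'n::finite set). x powr (r / real CARD('n)))"
proof -
  have "(\<Prod>i\<in>(UNIV::'n set). x powr (r / real CARD('n))) = (x powr (r / real CARD('n))) powr real CARD('n)"
    using assms by (simp add: powr_realpow)
  also have "\<dots> = x powr r" by (simp add: powr_powr)
  finally show ?thesis by simp
qed

lemma plus_norm_powr_le_prod_components:
  fixes x :: "real^'n::finite"
  assumes "0 \<le> p" and pos: "\<And>i. 0 < c + \<bar>x$i\<bar>"
  shows "(c + norm x) powr -p \<le> (\<Prod>i\<in>UNIV. (c + \<bar>x$i\<bar>) powr -(p / real CARD('n)))"
proof -
  have "0 < c + norm x"
    using pos[of undefined] component_le_norm_cart[of x undefined] by linarith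
  then have "(c + norm x) powr -p = (\<Prod>i\<in>(UNIV::'n set). (c + norm x) powr -(p / real CARD('n)))"
    by (subst powr_eq_prod_powr) simp_all
  also have "\<dots> \<le> (\<Prod>i\<in>UNIV. (c + \<bar>x$i\<bar>) powr -(p / real CARD('n)))"
    using assms component_le_norm_cart[of x]
    by (intro prod_mono conjI powr_mono2') (auto simp: divide_nonneg_pos)
  finally show ?thesis .
qed

definition decay_weight :: "real \<Rightarrow> real^'n::finite \<Rightarrow> real" where
  "decay_weight p h = (1 + norm h) powr -p"

definition sing_weight :: "real \<Rightarrow> real^'n::finite \<Rightarrow> real" where
  "sing_weight b h = indicator {h. norm h < 1} h * norm h powr -b"

lemma decay_weight_nonneg: "0 \<le> decay_weight p h"
  by (simp add: decay_weight_def)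

lemma sing_weight_nonneg: "0 \<le> sing_weight b h"
  by (simp add: sing_weight_def)

lemma decay_weight_measurable [measurable]: "decay_weight p \<in> borel_measurable borel"
  unfolding decay_weight_def[abs_def] by measurable

lemma sing_weight_measurable [measurable]: "sing_weight b \<in> borel_measurable borel"
  unfolding sing_weight_def[abs_def] by measurable

lemma integrable_decay_weight:
  fixes p :: real assumes "real CARD('n::finite) < p"
  shows "integrable lborel (decay_weight p :: real^'n \<Rightarrow> real)"
  unfolding decay_weight_def[abs_def]
proof (rule Bochner_Integration.integrable_bound)
  have "1 < p / real CARD('n)" using assms by simp
  then show "integrable lborel (\<lambda>h::real^'n. \<Prod>i\<in>UNIV. (1 + \<bar>h$i\<bar>) powr -(p / real CARD('n)))"
    by (intro integrable_prod_components integrable_one_plus_abs_powr)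
  show "AE h in lborel. norm ((1 + norm h) powr -p)
      \<le> norm (\<Prod>i\<in>UNIV. (1 + \<bar>(h::real^'n)$i\<bar>) powr -(p / real CARD('n)))"
    using assms plus_norm_powr_le_prod_components[of p 1]
    by (intro AE_I2) (simp add: abs_prod[symmetric] prod_nonneg add_pos_nonneg)
qed measurable

lemma integrable_sing_weight:
  fixes b :: real assumes "0 \<le> b" "b < real CARD('n::finite)"
  shows "integrable lborel (sing_weight b :: real^'n \<Rightarrow> real)"
  unfolding sing_weight_def[abs_def]
proof (rule Bochner_Integration.integrable_bound)
  have "0 \<le> b / real CARD('n)" "b / real CARD('n) < 1" using assms by simp_all
  then show "integrable lborel
      (\<lambda>h::real^'n. \<Prod>i\<in>UNIV. indicator {-1..1} (h$i) * \<bar>h$i\<bar> powr -(b / real CARD('n)))"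
    by (intro integrable_prod_components integrable_abs_powr_near_0)
  show "AE h in lborel. norm (indicator {h. norm h < 1} h * norm h powr -b)
     \<le> norm (\<Prod>i\<in>UNIV. indicator {-1..1} ((h::real^'n)$i) * \<bar>h$i\<bar> powr -(b / real CARD('n)))"
    using AE_lborel_components_nonzero
  proof eventually_elim
    case (elim h)
    show ?case
    proof (cases "norm h < 1")
      case True
      then have "h$i \<in> {-1..1}" for i
        using component_le_norm_cart[of h i] by (auto simp: abs_le_iff)
      then show ?thesis
        using True elim plus_norm_powr_le_prod_components[of b 0 h] assms
        by (simp add: abs_prod[symmetric] prod_nonneg)
    qed simp
  qed
qed measurable

section \<open>Increments along the coordinate axes\<close>

lemma has_real_derivative_pd:
  fixes f :: "real^'n::finite \<Rightarrow> real"
  assumes "\<And>y. (\<lambda>t. f (y + t *\<^sub>R axis i 1)) differentiable (at 0)"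
  shows "((\<lambda>t. f (x + t *\<^sub>R axis i 1)) has_real_derivative pd i f (x + t *\<^sub>R axis i 1)) (at t)"
proof -
  let ?y = "x + t *\<^sub>R axis i 1"
  have "((\<lambda>s. f (?y + s *\<^sub>R axis i 1)) has_real_derivative pd i f ?y) (at 0)"
    using assms[of ?y] unfolding pd_def by (simp add: DERIV_deriv_iff_real_differentiable)
  moreover have "(\<lambda>s. f (?y + s *\<^sub>R axis i 1)) = (\<lambda>s. f (x + (s + t) *\<^sub>R axis i 1))"
    by (simp add: algebra_simps scaleR_add_left)
  ultimately show ?thesis
    using DERIV_shift[of "\<lambda>t. f (x + t *\<^sub>R axis i 1)" "pd i f ?y" 0 t] by simp
qed

lemma pd_mean_value:
  fixes f :: "real^'n::finite \<Rightarrow> real"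
  assumes "\<And>y. (\<lambda>t. f (y + t *\<^sub>R axis i 1)) differentiable (at 0)"
  obtains \<theta> where "0 \<le> \<theta>" "\<theta> \<le> 1"
    "f (x + t *\<^sub>R axis i 1) - f x = t * pd i f (x + (\<theta> * t) *\<^sub>R axis i 1)"
proof -
  note der = has_real_derivative_pd[OF assms, of x]
  consider "t = 0" | "0 < t" | "t < 0" by linarith
  then show thesis
  proof cases
    case 1
    then show thesis by (intro that[of 0]) simp_all
  next
    case 2
    with MVT2[OF 2 der] obtain z where "0 < z" "z < t"
      "f (x + t *\<^sub>R axis i 1) - f x = t * pd i f (x + z *\<^sub>R axis i 1)"
      by auto
    then show thesis by (intro that[of "z / t"]) auto
  next
    case 3
    with MVT2[OF 3 der] obtain z where "t < z" "z < 0"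
      "f x - f (x + t *\<^sub>R axis i 1) = - t * pd i f (x + z *\<^sub>R axis i 1)"
      by auto
    then show thesis by (intro that[of "z / t"]) (auto simp: field_simps)
  qed
qed

lemma partial_basis_expansion_component:
  "(\<Sum>l\<in>S. h$l *\<^sub>R axis l 1) $ i = (if i \<in> S then h$i else (0::real))"
  by (simp add: sum_component axis_def if_distrib[of "\<lambda>x. _ * x"] cong: if_cong)

lemma partial_basis_expansion_UNIV: "(\<Sum>l\<in>UNIV. h$l *\<^sub>R axis l 1) = (h :: real^'n::finite)"
  unfolding vec_eq_iff partial_basis_expansion_component by simp

lemma partial_basis_expansion_step_bounds:
  fixes h :: "real^'n::finite"
  assumes "j \<notin> S" "0 \<le> \<theta>" "\<theta> \<le> 1"
  defines "p \<equiv> (\<Sum>l\<in>S. h$l *\<^sub>R axis l 1) + (\<theta> * h$j) *\<^sub>R axis j 1"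
  shows "norm p \<le> norm h" "(\<Sum>i\<in>UNIV. \<bar>p$i\<bar>) \<le> (\<Sum>i\<in>UNIV. \<bar>h$i\<bar>)"
proof -
  have "\<bar>\<theta> * h$j\<bar> \<le> \<bar>h$j\<bar>" using assms by (simp add: abs_mult mult_left_le_one_le)
  then have "\<bar>p$i\<bar> \<le> \<bar>h$i\<bar>" for i
    using assms(1) unfolding p_def vector_add_component partial_basis_expansion_component
    by (auto simp: axis_def)
  then show "norm p \<le> norm h" "(\<Sum>i\<in>UNIV. \<bar>p$i\<bar>) \<le> (\<Sum>i\<in>UNIV. \<bar>h$i\<bar>)"
    by (auto intro: norm_le_componentwise_cart sum_mono)
qed

lemma sum_abs_components_le_norm: "(\<Sum>i\<in>UNIV. \<bar>(h::real^'n::finite)$i\<bar>) \<le> real CARD('n) * norm h"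
  using sum_mono[of UNIV "\<lambda>i. \<bar>h$i\<bar>" "\<lambda>_. norm h"] component_le_norm_cart[of h] by simp

(* Change one coordinate at a time and apply the mean value theorem to each step. *)
lemma abs_diff_le_sum_abs_components:
  fixes f :: "real^'n::finite \<Rightarrow> real"
  assumes D: "\<And>i y. (\<lambda>t. f (y + t *\<^sub>R axis i 1)) differentiable (at 0)"
    and bnd: "\<And>i y. norm (y - u) \<le> r \<Longrightarrow> \<bar>pd i f y\<bar> \<le> M"
    and h: "norm h \<le> r"
  shows "\<bar>f (u + h) - f u\<bar> \<le> M * (\<Sum>i\<in>UNIV. \<bar>h$i\<bar>)"
proof -
  have "\<bar>f (u + (\<Sum>l\<in>S. h$l *\<^sub>R axis l 1)) - f u\<bar> \<le> M * (\<Sum>i\<in>S. \<bar>h$i\<bar>)" for S :: "'n set"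
    using finite[of S]
  proof (induction S rule: finite_induct)
    case (insert j S)
    let ?x = "u + (\<Sum>l\<in>S. h$l *\<^sub>R axis l 1)"
    obtain \<theta> where \<theta>: "0 \<le> \<theta>" "\<theta> \<le> 1"
      and mvt: "f (?x + h$j *\<^sub>R axis j 1) - f ?x = h$j * pd j f (?x + (\<theta> * h$j) *\<^sub>R axis j 1)"
      using pd_mean_value[OF D] by blast
    have "norm ((?x + (\<theta> * h$j) *\<^sub>R axis j 1) - u) \<le> r"
      using partial_basis_expansion_step_bounds(1)[OF insert(2) \<theta>, of h] h by (simp add: algebra_simps)
    then have "\<bar>h$j * pd j f (?x + (\<theta> * h$j) *\<^sub>R axis j 1)\<bar> \<le> \<bar>h$j\<bar> * M"
      by (simp add: abs_mult bnd mult_left_mono)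
    then show ?case
      using insert(1,2,3) mvt by (simp add: add.assoc algebra_simps)
  qed simp
  from this[of UNIV] show ?thesis by (simp add: partial_basis_expansion_UNIV)
qed

lemma abs_taylor_remainder_le_sum_abs_components:
  fixes f :: "real^'n::finite \<Rightarrow> real"
  assumes D1: "\<And>i y. (\<lambda>t. f (y + t *\<^sub>R axis i 1)) differentiable (at 0)"
    and D2: "\<And>i j y. (\<lambda>t. pd j f (y + t *\<^sub>R axis i 1)) differentiable (at 0)"
    and bnd: "\<And>i j y. norm (y - u) \<le> r \<Longrightarrow> \<bar>pd i (pd j f) y\<bar> \<le> M"
    and h: "norm h \<le> r"
  shows "\<bar>f (u + h) - f u - (\<Sum>j\<in>UNIV. pd j f u * h$j)\<bar> \<le> M * (\<Sum>i\<in>UNIV. \<bar>h$i\<bar>)\<^sup>2"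
proof -
  let ?A = "\<Sum>i\<in>UNIV. \<bar>h$i\<bar>"
  have "0 \<le> r" using h norm_ge_zero[of h] by linarith
  then have "0 \<le> M" using bnd[of u] by (metis abs_ge_zero diff_self norm_zero order_trans)
  have "\<bar>f (u + (\<Sum>l\<in>S. h$l *\<^sub>R axis l 1)) - f u - (\<Sum>j\<in>S. pd j f u * h$j)\<bar> \<le> M * (\<Sum>i\<in>S. \<bar>h$i\<bar>) * ?A"
    for S :: "'n set"
    using finite[of S]
  proof (induction S rule: finite_induct)
    case (insert j S)
    let ?x = "u + (\<Sum>l\<in>S. h$l *\<^sub>R axis l 1)"
    obtain \<theta> where \<theta>: "0 \<le> \<theta>" "\<theta> \<le> 1"
      and mvt: "f (?x + h$j *\<^sub>R axis j 1) - f ?x = h$j * pd j f (?x + (\<theta> * h$j) *\<^sub>R axis j 1)"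
      using pd_mean_value[OF D1] by blast
    define p :: "real^'n" where "p = (\<Sum>l\<in>S. h$l *\<^sub>R axis l 1) + (\<theta> * h$j) *\<^sub>R axis j 1"
    have "\<bar>pd j f (u + p) - pd j f u\<bar> \<le> M * (\<Sum>i\<in>UNIV. \<bar>p$i\<bar>)"
      using partial_basis_expansion_step_bounds(1)[OF insert(2) \<theta>, of h] h
      by (intro abs_diff_le_sum_abs_components[OF D2 bnd]) (auto simp: p_def)
    also have "\<dots> \<le> M * ?A"
      using partial_basis_expansion_step_bounds(2)[OF insert(2) \<theta>, of h] \<open>0 \<le> M\<close>
      by (simp add: p_def mult_left_mono)
    finally have "\<bar>h$j * (pd j f (u + p) - pd j f u)\<bar> \<le> \<bar>h$j\<bar> * (M * ?A)"
      by (simp add: abs_mult mult_left_mono)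
    moreover have "f (u + (\<Sum>l\<in>insert j S. h$l *\<^sub>R axis l 1)) - f u - (\<Sum>l\<in>insert j S. pd l f u * h$l)
       = h$j * (pd j f (u + p) - pd j f u) + (f ?x - f u - (\<Sum>l\<in>S. pd l f u * h$l))"
      using insert(1,2) mvt by (simp add: add.assoc p_def algebra_simps)
    ultimately show ?case
      using insert(1,2,3) by (simp add: algebra_simps)
  qed simp
  from this[of UNIV] show ?thesis by (simp add: partial_basis_expansion_UNIV power2_eq_square)
qed

lemma integrable_lborel_translate:
  fixes f :: "'a::euclidean_space \<Rightarrow> real"
  assumes "integrable lborel f"
  shows "integrable lborel (\<lambda>h. f (c + h))"
proof -
  have [measurable]: "f \<in> borel_measurable borel" using borel_measurable_integrable[OF assms] by simp
  have "integrable (distr lborel borel ((+) c)) f" by (simp add: lborel_distr_plus assms)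
  then show ?thesis by (subst (asm) integrable_distr_eq) auto
qed

lemma integral_lborel_translate:
  fixes f :: "'a::euclidean_space \<Rightarrow> real"
  assumes [measurable]: "f \<in> borel_measurable borel"
  shows "integral\<^sup>L lborel (\<lambda>h. f (c + h)) = integral\<^sup>L lborel f"
  using integral_distr[of "(+) c" lborel borel f] by (simp add: lborel_distr_plus)

lemma lborel_distr_uminus_euclidean: "distr lborel borel uminus = (lborel :: 'a::euclidean_space measure)"
  using lborel_affine[of "-1::real" "0::'a"] by (simp add: density_1 fun_eq_iff)

lemma integrable_lborel_reflect:
  fixes f :: "'a::euclidean_space \<Rightarrow> real"
  assumes "integrable lborel f"
  shows "integrable lborel (\<lambda>h. f (- h))"
proof -
  have [measurable]: "f \<in> borel_measurable borel" using borel_measurable_integrable[OF assms] by simp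
  have "integrable (distr lborel borel uminus) f" by (simp add: lborel_distr_uminus_euclidean assms)
  then show ?thesis by (subst (asm) integrable_distr_eq) auto
qed

lemma integral_lborel_reflect:
  fixes f :: "'a::euclidean_space \<Rightarrow> real"
  assumes [measurable]: "f \<in> borel_measurable borel"
  shows "integral\<^sup>L lborel (\<lambda>h. f (- h)) = integral\<^sup>L lborel f"
  using integral_distr[of uminus lborel borel f] by (simp add: lborel_distr_uminus_euclidean)

section \<open>Peetre-type inequalities\<close>

lemma powr_neg_le_of_le_mult:
  fixes x y c a :: real
  assumes "0 < x" "0 < y" "y \<le> c * x" "0 \<le> a"
  shows "x powr -a \<le> c powr a * y powr -a"
proof -
  have "0 < c" using assms by (metis mult_nonpos_nonneg not_less order.strict_trans2 less_imp_le)
  have "y powr a \<le> (c * x) powr a" using assms by (intro powr_mono2) auto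
  also have "\<dots> = c powr a * x powr a" using \<open>0 < c\<close> assms by (simp add: powr_mult)
  finally show ?thesis using assms \<open>0 < c\<close> by (simp add: powr_minus field_simps)
qed

lemma one_plus_norm_powr_neg_le_near:
  fixes u y :: "'a::real_normed_vector"
  assumes "norm (y - u) \<le> 1" "0 \<le> N"
  shows "(1 + norm y) powr -N \<le> 2 powr N * (1 + norm u) powr -N"
proof (rule powr_neg_le_of_le_mult)
  have "norm u \<le> norm y + 1"
    using norm_triangle_ineq2[of u y] assms(1) by (simp add: norm_minus_commute)
  then show "1 + norm u \<le> 2 * (1 + norm y)" using norm_ge_zero[of y] by argo
qed (use assms in \<open>auto simp: add_pos_nonneg\<close>)

lemma norm_powr_neg_le_peetre:
  fixes u h :: "'a::real_normed_vector"
  assumes "1 \<le> norm h" "0 \<le> a"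
  shows "norm h powr -a \<le> 2 powr a * (1 + norm (u + h)) powr a * (1 + norm u) powr -a"
proof -
  have "1 + norm u \<le> (2 * (1 + norm (u + h))) * norm h"
  proof -
    have "norm u \<le> norm (u + h) + norm h" using norm_triangle_ineq4[of "u + h" h] by simp
    then have "1 + norm u \<le> (1 + norm (u + h)) * (1 + norm h)"
      using mult_nonneg_nonneg[OF norm_ge_zero norm_ge_zero, of "u + h" h]
      unfolding distrib_left distrib_right by argo
    also have "\<dots> \<le> (1 + norm (u + h)) * (2 * norm h)"
      using assms by (intro mult_left_mono) auto
    finally show ?thesis by (simp add: algebra_simps)
  qed
  then have "norm h powr -a \<le> (2 * (1 + norm (u + h))) powr a * (1 + norm u) powr -a"
    using assms by (intro powr_neg_le_of_le_mult) (auto simp: add_pos_nonneg)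
  also have "(2 * (1 + norm (u + h))) powr a = 2 powr a * (1 + norm (u + h)) powr a"
    by (rule powr_mult)
  finally show ?thesis .
qed

section \<open>Principal values on a half-space\<close>

definition C2_decay :: "real \<Rightarrow> real \<Rightarrow> (real^'n::finite \<Rightarrow> real) \<Rightarrow> bool" where
  "C2_decay B N g \<longleftrightarrow> continuous_on UNIV g
     \<and> (\<forall>i y. (\<lambda>t. g (y + t *\<^sub>R axis i 1)) differentiable (at 0))
     \<and> (\<forall>i j y. (\<lambda>t. pd j g (y + t *\<^sub>R axis i 1)) differentiable (at 0))
     \<and> (\<forall>y. \<bar>g y\<bar> \<le> B * (1 + norm y) powr -N)
     \<and> (\<forall>i y. \<bar>pd i g y\<bar> \<le> B * (1 + norm y) powr -N)
     \<and> (\<forall>i j y. \<bar>pd i (pd j g) y\<bar> \<le> B * (1 + norm y) powr -N)"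

lemma C2_decayD:
  assumes "C2_decay B N g"
  shows "continuous_on UNIV g"
    and "\<And>i y. (\<lambda>t. g (y + t *\<^sub>R axis i 1)) differentiable (at 0)"
    and "\<And>i j y. (\<lambda>t. pd j g (y + t *\<^sub>R axis i 1)) differentiable (at 0)"
    and "\<And>y. \<bar>g y\<bar> \<le> B * (1 + norm y) powr -N"
    and "\<And>i y. \<bar>pd i g y\<bar> \<le> B * (1 + norm y) powr -N"
    and "\<And>i j y. \<bar>pd i (pd j g) y\<bar> \<le> B * (1 + norm y) powr -N"
  using assms by (simp_all add: C2_decay_def)

lemma C2_decay_mono: "C2_decay B N g \<Longrightarrow> B \<le> B' \<Longrightarrow> C2_decay B' N g"
  unfolding C2_decay_def by (meson mult_right_mono order_trans powr_ge_zero)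

lemma C2_decay_imp_nonneg: "C2_decay B N g \<Longrightarrow> 0 \<le> B"
  using C2_decayD(4)[of B N g 0] by simp

definition half_space_const :: "real \<Rightarrow> real \<Rightarrow> real \<Rightarrow> 'n::finite itself \<Rightarrow> real" where
  "half_space_const B N \<gamma> _ = B * 2 powr (N + real CARD('n) + \<gamma>) * real CARD('n)^2 *
     (integral\<^sup>L lborel (sing_weight (real CARD('n) - 1 + \<gamma>/2) :: real^'n \<Rightarrow> real)
      + integral\<^sup>L lborel (sing_weight (max 0 (real CARD('n) + \<gamma> - 2)) :: real^'n \<Rightarrow> real)
      + integral\<^sup>L lborel (decay_weight (real CARD('n) + \<gamma>) :: real^'n \<Rightarrow> real)
      + integral\<^sup>L lborel (decay_weight (real CARD('n) + 1) :: real^'n \<Rightarrow> real))"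

lemma half_space_const_nonneg: "0 \<le> B \<Longrightarrow> 0 \<le> half_space_const B N \<gamma> TYPE('n::finite)"
  unfolding half_space_const_def
  by (intro mult_nonneg_nonneg add_nonneg_nonneg integral_nonneg_AE AE_I2)
     (simp_all add: sing_weight_nonneg decay_weight_nonneg)

locale half_space_pv =
  fixes g :: "real^'n::finite \<Rightarrow> real" and B N \<gamma> \<sigma> :: real and k :: 'n and u :: "real^'n"
  assumes g: "C2_decay B N g"
    and N: "2 * real CARD('n) + 1 + \<gamma> \<le> N"
      \<comment> \<open>after Peetre's inequality the far tail needs (1 + |u + h|) powr (d + \<gamma> - N) integrable\<close>
    and \<gamma>: "0 < \<gamma>" "\<gamma> < 2"
    and \<sigma>: "\<sigma> = 1 \<or> \<sigma> = -1"
    and u: "0 < \<sigma> * u$k"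
begin

definition "\<alpha> = real CARD('n) + \<gamma>"
definition "half = {v::real^'n. 0 < \<sigma> * v$k}"
definition "\<rho> = min 1 \<bar>u$k\<bar>"
definition "M = B * 2 powr N * (1 + norm u) powr -\<alpha>"

lemma g_measurable [measurable]: "g \<in> borel_measurable borel"
  using C2_decayD(1)[OF g] by (rule borel_measurable_continuous_onI)

lemma half_measurable [measurable]: "Measurable.pred borel (\<lambda>v. v \<in> half)"
  unfolding half_def by measurable

lemma B_nonneg: "0 \<le> B"
  using C2_decay_imp_nonneg[OF g] .

lemma N_nonneg: "0 \<le> N"
  using N \<gamma> by linarith

lemma M_nonneg: "0 \<le> M"
  using B_nonneg by (simp add: M_def)

lemma \<rho>_pos: "0 < \<rho>"
  using u by (auto simp: \<rho>_def)

lemma \<rho>_le_1: "\<rho> \<le> 1"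
  by (simp add: \<rho>_def)

lemma \<alpha>_pos: "0 < \<alpha>"
  using \<gamma> by (simp add: \<alpha>_def)

lemma ball_subset_half: "norm h < \<rho> \<Longrightarrow> u + h \<in> half"
  using component_le_norm_cart[of h k] u \<sigma> by (auto simp: half_def \<rho>_def)

lemma bounds_near_u:
  assumes "norm (y - u) \<le> 1"
  shows "\<bar>g y\<bar> \<le> M" "\<bar>pd i g y\<bar> \<le> M" "\<bar>pd i (pd j g) y\<bar> \<le> M"
proof -
  have "B * (1 + norm y) powr -N \<le> B * (2 powr N * (1 + norm u) powr -N)"
    using one_plus_norm_powr_neg_le_near[OF assms N_nonneg] B_nonneg by (intro mult_left_mono)
  also have "\<dots> \<le> B * (2 powr N * (1 + norm u) powr -\<alpha>)"
    using N B_nonneg by (intro mult_left_mono powr_mono) (auto simp: \<alpha>_def)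
  also have "\<dots> = M"
    by (simp add: M_def mult.assoc)
  finally show "\<bar>g y\<bar> \<le> M" "\<bar>pd i g y\<bar> \<le> M" "\<bar>pd i (pd j g) y\<bar> \<le> M"
    using C2_decayD(4-6)[OF g] by (meson order_trans)+
qed

lemma first_diff_near_u:
  assumes "norm h \<le> 1"
  shows "\<bar>g (u + h) - g u\<bar> \<le> M * real CARD('n) * norm h"
proof -
  have "\<bar>g (u + h) - g u\<bar> \<le> M * (\<Sum>i\<in>UNIV. \<bar>h$i\<bar>)"
    using assms by (intro abs_diff_le_sum_abs_components[OF C2_decayD(2)[OF g]] bounds_near_u)
  also have "\<dots> \<le> M * (real CARD('n) * norm h)"
    by (intro mult_left_mono sum_abs_components_le_norm M_nonneg)
  finally show ?thesis by (simp add: mult.assoc)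
qed

lemma second_diff_near_u:
  assumes "norm h \<le> 1"
  shows "\<bar>2 * g u - g (u + h) - g (u - h)\<bar> \<le> 2 * M * real CARD('n)^2 * (norm h)\<^sup>2"
proof -
  have taylor: "\<bar>g (u + v) - g u - (\<Sum>j\<in>UNIV. pd j g u * v$j)\<bar> \<le> M * (real CARD('n) * norm h)\<^sup>2"
    if "norm v = norm h" for v
  proof -
    have "\<bar>g (u + v) - g u - (\<Sum>j\<in>UNIV. pd j g u * v$j)\<bar> \<le> M * (\<Sum>i\<in>UNIV. \<bar>v$i\<bar>)\<^sup>2"
      using assms that by (intro abs_taylor_remainder_le_sum_abs_components[OF C2_decayD(2,3)[OF g]]
        bounds_near_u) simp_all
    also have "\<dots> \<le> M * (real CARD('n) * norm h)\<^sup>2"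
      using sum_abs_components_le_norm[of v] that M_nonneg
      by (intro mult_left_mono power_mono) (auto simp: sum_nonneg)
    finally show ?thesis .
  qed
  have "\<bar>2 * g u - g (u + h) - g (u - h)\<bar> \<le> 2 * (M * (real CARD('n) * norm h)\<^sup>2)"
    using taylor[of h] taylor[of "-h"] by (simp add: sum_negf)
  then show ?thesis by (simp add: power_mult_distrib)
qed

definition "kern h = (g u - g (u + h)) / norm h powr \<alpha>"

lemma kern_measurable [measurable]: "kern \<in> borel_measurable borel"
  unfolding kern_def[abs_def] by measurable

lemma kern_near:
  assumes "0 < r" "r \<le> norm h" "norm h < 1"
  shows "\<bar>kern h\<bar> \<le> M * real CARD('n) * r powr (-\<gamma>/2) * sing_weight (real CARD('n) - 1 + \<gamma>/2) h"
proof -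
  have "0 < norm h" using assms by linarith
  have "\<bar>kern h\<bar> = \<bar>g (u + h) - g u\<bar> * norm h powr -\<alpha>"
    by (simp add: kern_def powr_minus divide_inverse abs_mult abs_minus_commute)
  also have "\<dots> \<le> (M * real CARD('n) * norm h) * norm h powr -\<alpha>"
    using first_diff_near_u[of h] assms by (intro mult_right_mono) auto
  also have "\<dots> = M * real CARD('n) * (norm h * norm h powr -\<alpha>)"
    by simp
  also have "norm h * norm h powr -\<alpha> = norm h powr (-\<gamma>/2) * norm h powr -(real CARD('n) - 1 + \<gamma>/2)"
    using \<open>0 < norm h\<close> by (simp add: \<alpha>_def powr_mult_base flip: powr_add) (simp add: algebra_simps)
  also have "\<dots> \<le> r powr (-\<gamma>/2) * norm h powr -(real CARD('n) - 1 + \<gamma>/2)"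
    using assms \<gamma> by (intro mult_right_mono powr_mono2') auto
  also have "norm h powr -(real CARD('n) - 1 + \<gamma>/2) = sing_weight (real CARD('n) - 1 + \<gamma>/2) h"
    using assms by (simp add: sing_weight_def)
  finally show ?thesis
    using M_nonneg by (simp add: mult_left_mono mult.assoc)
qed


lemma kern_far:
  assumes "1 \<le> norm h"
  shows "\<bar>kern h\<bar> \<le> M * 2 powr \<alpha> * (decay_weight \<alpha> h + decay_weight (real CARD('n) + 1) (u + h))"
proof -
  have "\<bar>kern h\<bar> = \<bar>g u - g (u + h)\<bar> * norm h powr -\<alpha>"
    by (simp add: kern_def powr_minus divide_inverse abs_mult)
  also have "\<dots> \<le> \<bar>g u\<bar> * norm h powr -\<alpha> + \<bar>g (u + h)\<bar> * norm h powr -\<alpha>"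
    by (simp add: mult_right_mono abs_triangle_ineq4 flip: distrib_right)
  also have "\<bar>g u\<bar> * norm h powr -\<alpha> \<le> M * (2 powr \<alpha> * decay_weight \<alpha> h)"
  proof (rule mult_mono)
    show "\<bar>g u\<bar> \<le> M" by (rule bounds_near_u) simp
    show "norm h powr -\<alpha> \<le> 2 powr \<alpha> * decay_weight \<alpha> h"
      unfolding decay_weight_def using assms \<alpha>_pos by (intro powr_neg_le_of_le_mult) auto
  qed (use M_nonneg in auto)
  also have "\<bar>g (u + h)\<bar> * norm h powr -\<alpha>
      \<le> B * (1 + norm (u + h)) powr -N * (2 powr \<alpha> * (1 + norm (u + h)) powr \<alpha> * (1 + norm u) powr -\<alpha>)"
    using C2_decayD(4)[OF g] assms \<alpha>_pos B_nonneg by (intro mult_mono norm_powr_neg_le_peetre) auto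
  also have "\<dots> = B * 2 powr \<alpha> * (1 + norm u) powr -\<alpha> * (1 + norm (u + h)) powr (\<alpha> - N)"
    by (simp add: powr_diff powr_minus field_simps)
  also have "\<dots> \<le> M * 2 powr \<alpha> * decay_weight (real CARD('n) + 1) (u + h)"
  proof -
    have "(1 + norm (u + h)) powr (\<alpha> - N) \<le> decay_weight (real CARD('n) + 1) (u + h)"
      using N unfolding decay_weight_def by (intro powr_mono) (auto simp: \<alpha>_def)
    moreover have "B \<le> B * 2 powr N"
      using B_nonneg N_nonneg by (simp add: mult_le_cancel_left1 ge_one_powr_ge_zero)
    ultimately have "B * 2 powr \<alpha> * (1 + norm u) powr -\<alpha> * (1 + norm (u + h)) powr (\<alpha> - N)
        \<le> (B * 2 powr N) * 2 powr \<alpha> * (1 + norm u) powr -\<alpha> * decay_weight (real CARD('n) + 1) (u + h)"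
      using B_nonneg by (intro mult_mono order_refl) auto
    then show ?thesis by (simp add: M_def ac_simps)
  qed
  finally show ?thesis by (simp add: algebra_simps)
qed

lemma kern_sym:
  assumes "norm h < \<rho>"
  shows "\<bar>kern h + kern (- h)\<bar> \<le> 2 * M * real CARD('n)^2 * sing_weight (max 0 (real CARD('n) + \<gamma> - 2)) h"
proof (cases "h = 0")
  case True
  then show ?thesis using M_nonneg by (simp add: kern_def sing_weight_nonneg)
next
  case False
  then have "0 < norm h" "norm h < 1" using assms \<rho>_le_1 by auto
  have "kern h + kern (- h) = (2 * g u - g (u + h) - g (u - h)) / norm h powr \<alpha>"
    by (simp add: kern_def add_divide_distrib[symmetric])
  then have "\<bar>kern h + kern (- h)\<bar> = \<bar>2 * g u - g (u + h) - g (u - h)\<bar> * norm h powr -\<alpha>"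
    by (simp add: powr_minus divide_inverse abs_mult)
  also have "\<dots> \<le> (2 * M * real CARD('n)^2 * (norm h)\<^sup>2) * norm h powr -\<alpha>"
    using second_diff_near_u[of h] \<open>norm h < 1\<close> by (intro mult_right_mono) auto
  also have "\<dots> = 2 * M * real CARD('n)^2 * ((norm h)\<^sup>2 * norm h powr -\<alpha>)"
    by simp
  also have "(norm h)\<^sup>2 * norm h powr -\<alpha> = norm h powr (2 - \<alpha>)"
    using \<open>0 < norm h\<close> by (simp add: powr_diff powr_minus powr_realpow divide_inverse)
  also have "norm h powr (2 - \<alpha>) \<le> sing_weight (max 0 (real CARD('n) + \<gamma> - 2)) h"
    using \<open>0 < norm h\<close> \<open>norm h < 1\<close> by (simp add: sing_weight_def \<alpha>_def powr_mono')
  finally show ?thesis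
    using M_nonneg by (simp add: mult_left_mono mult.assoc)
qed

definition "far_part h = indicator half (u + h) * indicator {h. \<rho> \<le> norm h} h * kern h"
definition "near_part \<epsilon> h = indicator {h. \<epsilon> \<le> norm h \<and> norm h < \<rho>} h * kern h"
definition "sym_part h = indicator {h. norm h < \<rho>} h * (kern h + kern (- h))"
definition "majorant h = sing_weight (real CARD('n) - 1 + \<gamma>/2) h + sing_weight (max 0 (real CARD('n) + \<gamma> - 2)) h
   + decay_weight \<alpha> h + decay_weight (real CARD('n) + 1) (u + h)"

lemma far_part_measurable [measurable]: "far_part \<in> borel_measurable borel"
  unfolding far_part_def[abs_def] by measurable

lemma near_part_measurable [measurable]: "near_part \<epsilon> \<in> borel_measurable borel"
  unfolding near_part_def[abs_def] by measurable

lemma sym_part_measurable [measurable]: "sym_part \<in> borel_measurable borel"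
  unfolding sym_part_def[abs_def] by measurable

lemma integrable_majorant: "integrable lborel majorant"
  unfolding majorant_def[abs_def] using \<gamma>
  by (intro Bochner_Integration.integrable_add integrable_sing_weight integrable_decay_weight
      integrable_lborel_translate) (auto simp: \<alpha>_def)

lemma integral_majorant: "integral\<^sup>L lborel majorant
   = integral\<^sup>L lborel (sing_weight (real CARD('n) - 1 + \<gamma>/2) :: real^'n \<Rightarrow> real)
   + integral\<^sup>L lborel (sing_weight (max 0 (real CARD('n) + \<gamma> - 2)) :: real^'n \<Rightarrow> real)
   + integral\<^sup>L lborel (decay_weight \<alpha> :: real^'n \<Rightarrow> real)
   + integral\<^sup>L lborel (decay_weight (real CARD('n) + 1) :: real^'n \<Rightarrow> real)"
proof -
  have "integrable lborel (sing_weight (real CARD('n) - 1 + \<gamma>/2) :: real^'n \<Rightarrow> real)"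
    "integrable lborel (sing_weight (max 0 (real CARD('n) + \<gamma> - 2)) :: real^'n \<Rightarrow> real)"
    "integrable lborel (decay_weight \<alpha> :: real^'n \<Rightarrow> real)"
    "integrable lborel (decay_weight (real CARD('n) + 1) :: real^'n \<Rightarrow> real)"
    using \<gamma> by (intro integrable_sing_weight integrable_decay_weight; simp add: \<alpha>_def)+
  then show ?thesis
    unfolding majorant_def[abs_def]
    by (simp add: integrable_lborel_translate integral_lborel_translate)
qed

lemma \<rho>_powr_le: "\<rho> powr (-\<gamma>/2) \<le> 1 + \<bar>u$k\<bar> powr (-\<gamma>/2)"
  by (cases "\<bar>u$k\<bar> \<le> 1") (auto simp: \<rho>_def min_def)

lemma abs_far_part_le: "\<bar>far_part h\<bar> \<le> \<bar>kern h\<bar>"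
  by (simp add: far_part_def abs_mult indicator_def)

definition "majorant_coeff = M * 2 powr \<alpha> * real CARD('n)^2 * (1 + \<bar>u$k\<bar> powr (-\<gamma>/2))"

lemma far_part_sym_part_bound: "\<bar>far_part h\<bar> + \<bar>sym_part h\<bar> / 2 \<le> majorant_coeff * majorant h"
proof -
  let ?Q = "1 + \<bar>u$k\<bar> powr (-\<gamma>/2)" and ?d = "real CARD('n)"
  have Q: "1 \<le> ?Q" "\<rho> powr (-\<gamma>/2) \<le> ?Q" using \<rho>_powr_le by simp_all
  have two: "1 \<le> 2 powr \<alpha>" using \<alpha>_pos by (simp add: ge_one_powr_ge_zero)
  have d: "1 \<le> ?d" "?d \<le> ?d^2" by (simp_all add: power2_eq_square)
  consider "norm h < \<rho>" | "\<rho> \<le> norm h" "norm h < 1" | "1 \<le> norm h"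
    by linarith
  then have "\<bar>far_part h\<bar> + \<bar>sym_part h\<bar> / 2 \<le> (M * 2 powr \<alpha> * ?d^2 * ?Q) * majorant h"
  proof cases
    case 1
    have "\<bar>sym_part h\<bar> / 2 \<le> (M * 1 * ?d^2 * 1) * sing_weight (max 0 (?d + \<gamma> - 2)) h"
      using kern_sym[OF 1] 1 by (simp add: sym_part_def)
    also have "\<dots> \<le> (M * 2 powr \<alpha> * ?d^2 * ?Q) * majorant h"
      using M_nonneg Q two
      by (intro mult_mono order_refl) (auto simp: majorant_def sing_weight_nonneg decay_weight_nonneg)
    finally show ?thesis using 1 by (simp add: far_part_def)
  next
    case 2
    have "\<bar>far_part h\<bar> \<le> (M * 1 * ?d * \<rho> powr (-\<gamma>/2)) * sing_weight (?d - 1 + \<gamma>/2) h"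
      using abs_far_part_le[of h] kern_near[OF \<rho>_pos 2] by simp
    also have "\<dots> \<le> (M * 2 powr \<alpha> * ?d^2 * ?Q) * majorant h"
      using M_nonneg Q two d
      by (intro mult_mono order_refl) (auto simp: majorant_def sing_weight_nonneg decay_weight_nonneg)
    finally show ?thesis using 2 by (simp add: sym_part_def)
  next
    case 3
    have "\<bar>far_part h\<bar> \<le> (M * 2 powr \<alpha> * 1 * 1) * (decay_weight \<alpha> h + decay_weight (?d + 1) (u + h))"
      using abs_far_part_le[of h] kern_far[OF 3] by simp
    also have "\<dots> \<le> (M * 2 powr \<alpha> * ?d^2 * ?Q) * majorant h"
      using M_nonneg Q two d
      by (intro mult_mono order_refl) (auto simp: majorant_def sing_weight_nonneg decay_weight_nonneg)
    finally show ?thesis using 3 \<rho>_le_1 by (simp add: sym_part_def)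
  qed
  then show ?thesis by (simp add: majorant_coeff_def)
qed

lemma abs_far_part_le_majorant: "\<bar>far_part h\<bar> \<le> majorant_coeff * majorant h"
  by (rule order_trans[OF _ far_part_sym_part_bound]) simp

lemma abs_sym_part_le_majorant: "\<bar>sym_part h\<bar> \<le> 2 * majorant_coeff * majorant h"
  using far_part_sym_part_bound[of h] abs_ge_zero[of "far_part h"] by linarith

lemma integrable_far_part: "integrable lborel far_part"
proof (rule Bochner_Integration.integrable_bound)
  show "integrable lborel (\<lambda>h. majorant_coeff * majorant h)"
    using integrable_majorant by simp
  show "AE h in lborel. norm (far_part h) \<le> norm (majorant_coeff * majorant h)"
    by (intro AE_I2) (metis abs_far_part_le_majorant abs_ge_self order_trans real_norm_def)
qed measurable

lemma integrable_sym_part: "integrable lborel sym_part"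
proof (rule Bochner_Integration.integrable_bound)
  show "integrable lborel (\<lambda>h. 2 * majorant_coeff * majorant h)"
    using integrable_majorant by simp
  show "AE h in lborel. norm (sym_part h) \<le> norm (2 * majorant_coeff * majorant h)"
    by (intro AE_I2) (metis abs_sym_part_le_majorant abs_ge_self order_trans real_norm_def)
qed measurable

lemma integrable_near_part:
  assumes "0 < \<epsilon>"
  shows "integrable lborel (near_part \<epsilon>)"
proof (rule Bochner_Integration.integrable_bound)
  let ?c = "M * real CARD('n) * \<epsilon> powr (-\<gamma>/2)"
  show "integrable lborel (\<lambda>h::real^'n. ?c * sing_weight (real CARD('n) - 1 + \<gamma>/2) h)"
    using \<gamma> by (intro integrable_mult_right integrable_sing_weight) auto
  have "\<bar>near_part \<epsilon> h\<bar> \<le> ?c * sing_weight (real CARD('n) - 1 + \<gamma>/2) h" for h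
    using kern_near[OF assms, of h] \<rho>_le_1 M_nonneg sing_weight_nonneg[of _ h]
    by (auto simp: near_part_def indicator_def)
  then show "AE h in lborel. norm (near_part \<epsilon> h) \<le> norm (?c * sing_weight (real CARD('n) - 1 + \<gamma>/2) h)"
    by (intro AE_I2) (metis abs_ge_self order_trans real_norm_def)
qed measurable

definition "trunc_integral \<epsilon> = set_lebesgue_integral lborel (half \<inter> {v. \<epsilon> \<le> norm (v - u)})
   (\<lambda>v. (g u - g v) / norm (v - u) powr \<alpha>)"

lemma trunc_integral_split:
  assumes "0 < \<epsilon>" "\<epsilon> \<le> \<rho>"
  shows "trunc_integral \<epsilon> = integral\<^sup>L lborel far_part + integral\<^sup>L lborel (near_part \<epsilon>)"
proof -
  let ?f = "\<lambda>v. indicator (half \<inter> {v. \<epsilon> \<le> norm (v - u)}) v * ((g u - g v) / norm (v - u) powr \<alpha>)"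
  have "trunc_integral \<epsilon> = integral\<^sup>L lborel ?f"
    by (simp add: trunc_integral_def set_lebesgue_integral_def)
  also have "\<dots> = integral\<^sup>L lborel (\<lambda>h. ?f (u + h))"
    by (rule integral_lborel_translate[symmetric]) measurable
  also have "(\<lambda>h. ?f (u + h)) = (\<lambda>h. far_part h + near_part \<epsilon> h)"
    using ball_subset_half assms
    by (force simp: far_part_def near_part_def kern_def indicator_def)
  also have "integral\<^sup>L lborel \<dots> = integral\<^sup>L lborel far_part + integral\<^sup>L lborel (near_part \<epsilon>)"
    by (intro Bochner_Integration.integral_add integrable_far_part integrable_near_part assms)
  finally show ?thesis .
qed

lemma integral_near_part_symmetrize:
  assumes "0 < \<epsilon>"
  shows "integral\<^sup>L lborel (near_part \<epsilon>) = integral\<^sup>L lborel (\<lambda>h. indicator {h. \<epsilon> \<le> norm h} h * sym_part h) / 2"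
proof -
  have "(\<lambda>h. indicator {h. \<epsilon> \<le> norm h} h * sym_part h) = (\<lambda>h. near_part \<epsilon> h + near_part \<epsilon> (- h))"
    by (auto simp: near_part_def sym_part_def indicator_def)
  moreover have "integral\<^sup>L lborel (\<lambda>h. near_part \<epsilon> (- h)) = integral\<^sup>L lborel (near_part \<epsilon>)"
    by (rule integral_lborel_reflect) measurable
  ultimately show ?thesis
    using integrable_near_part[OF assms] integrable_lborel_reflect[OF integrable_near_part[OF assms]]
    by simp
qed

lemma tendsto_truncated_sym_part:
  "((\<lambda>\<epsilon>. integral\<^sup>L lborel (\<lambda>h. indicator {h. \<epsilon> \<le> norm h} h * sym_part h))
     \<longlongrightarrow> integral\<^sup>L lborel sym_part) (at_right 0)"
proof (rule tendsto_at_right_sequentially[OF zero_less_one])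
  fix E :: "nat \<Rightarrow> real" assume E: "\<And>n. 0 < E n" "E \<longlonglongrightarrow> 0"
  show "(\<lambda>n. integral\<^sup>L lborel (\<lambda>h. indicator {h. E n \<le> norm h} h * sym_part h))
      \<longlonglongrightarrow> integral\<^sup>L lborel sym_part"
  proof (rule integral_dominated_convergence[where w="\<lambda>h. 2 * majorant_coeff * majorant h"])
    show "integrable lborel (\<lambda>h. 2 * majorant_coeff * majorant h)"
      using integrable_majorant by simp
    show "AE h in lborel. norm (indicator {h. E n \<le> norm h} h * sym_part h) \<le> 2 * majorant_coeff * majorant h"
      for n
      using abs_sym_part_le_majorant order_trans[OF abs_ge_zero abs_sym_part_le_majorant]
      by (intro AE_I2) (simp add: indicator_def)
    show "AE h in lborel. (\<lambda>n. indicator {h. E n \<le> norm h} h * sym_part h) \<longlonglongrightarrow> sym_part h"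
    proof (intro AE_I2 tendsto_eventually)
      fix h :: "real^'n"
      show "\<forall>\<^sub>F n in sequentially. indicator {h. E n \<le> norm h} h * sym_part h = sym_part h"
      proof (cases "h = 0")
        case True
        then show ?thesis by (simp add: sym_part_def kern_def)
      next
        case False
        then have "0 < norm h" by simp
        from order_tendstoD(2)[OF E(2) this] show ?thesis
          by eventually_elim (simp add: indicator_def)
      qed
    qed
  qed measurable
qed

definition "pv = integral\<^sup>L lborel far_part + integral\<^sup>L lborel sym_part / 2"

lemma tendsto_trunc_integral: "(trunc_integral \<longlongrightarrow> pv) (at_right 0)"
proof -
  have "((\<lambda>\<epsilon>. integral\<^sup>L lborel far_part
      + integral\<^sup>L lborel (\<lambda>h. indicator {h. \<epsilon> \<le> norm h} h * sym_part h) / 2) \<longlongrightarrow> pv) (at_right 0)"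
    unfolding pv_def by (intro tendsto_intros tendsto_truncated_sym_part) simp
  moreover have "\<forall>\<^sub>F \<epsilon> in at_right 0. integral\<^sup>L lborel far_part
      + integral\<^sup>L lborel (\<lambda>h. indicator {h. \<epsilon> \<le> norm h} h * sym_part h) / 2 = trunc_integral \<epsilon>"
    using \<rho>_pos unfolding eventually_at_right[OF \<rho>_pos]
    by (auto simp: trunc_integral_split integral_near_part_symmetrize intro!: exI[of _ \<rho>])
  ultimately show ?thesis by (rule Lim_transform_eventually)
qed

lemma abs_pv_le:
  "\<bar>pv\<bar> \<le> half_space_const B N \<gamma> TYPE('n) * (1 + norm u) powr -\<alpha> * (1 + \<bar>u$k\<bar> powr (-\<gamma>/2))"
proof -
  have "\<bar>pv\<bar> \<le> \<bar>integral\<^sup>L lborel far_part\<bar> + \<bar>integral\<^sup>L lborel sym_part\<bar> / 2"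
    unfolding pv_def using abs_triangle_ineq by simp
  also have "\<dots> \<le> integral\<^sup>L lborel (\<lambda>h. \<bar>far_part h\<bar>) + integral\<^sup>L lborel (\<lambda>h. \<bar>sym_part h\<bar>) / 2"
    by (intro add_mono divide_right_mono integral_abs_bound) simp
  also have "\<dots> = integral\<^sup>L lborel (\<lambda>h. \<bar>far_part h\<bar> + \<bar>sym_part h\<bar> / 2)"
    using integrable_far_part integrable_sym_part by simp
  also have "\<dots> \<le> integral\<^sup>L lborel (\<lambda>h. majorant_coeff * majorant h)"
    using integrable_far_part integrable_sym_part integrable_majorant far_part_sym_part_bound
    by (intro integral_mono) auto
  also have "\<dots> = half_space_const B N \<gamma> TYPE('n) * (1 + norm u) powr -\<alpha> * (1 + \<bar>u$k\<bar> powr (-\<gamma>/2))"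
    by (simp add: integral_majorant majorant_coeff_def half_space_const_def M_def \<alpha>_def powr_add)
  finally show ?thesis .
qed

lemma abs_reg_frac_lap_le:
  assumes "\<And>v. v \<in> half \<Longrightarrow> G v = g v"
  shows "\<bar>reg_frac_lap \<gamma> half G u\<bar> \<le> \<bar>c_gamma \<gamma> TYPE('n)\<bar> * half_space_const B N \<gamma> TYPE('n)
      * (1 + norm u) powr -\<alpha> * (1 + \<bar>u$k\<bar> powr (-\<gamma>/2))"
proof -
  have "u \<in> half" using ball_subset_half[of 0] \<rho>_pos by simp
  have "(\<lambda>\<epsilon>. set_lebesgue_integral lborel (half \<inter> {v. norm (v - u) \<ge> \<epsilon>})
      (\<lambda>v. (G u - G v) / norm (v - u) powr (real CARD('n) + \<gamma>))) = trunc_integral"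
    using \<open>u \<in> half\<close> assms unfolding trunc_integral_def set_lebesgue_integral_def \<alpha>_def
    by (intro ext Bochner_Integration.integral_cong) (auto simp: indicator_def)
  then have "reg_frac_lap \<gamma> half G u = c_gamma \<gamma> TYPE('n) * pv"
    using \<open>u \<in> half\<close> tendsto_Lim[OF _ tendsto_trunc_integral] by (simp add: reg_frac_lap_def)
  then show ?thesis
    using abs_pv_le by (simp add: abs_mult mult_left_mono mult.assoc)
qed

end

section \<open>Functions of the class S_gamma_0\<close>

lemma bracket_ge_abs_pdl:
  fixes f :: "real^'n::finite \<Rightarrow> real"
  assumes "length is \<le> j"
  shows "\<bar>pdl is f y\<bar> \<le> bracket j f y"
proof -
  have fin: "finite {is :: 'n list. length is = m}" for m
    using finite_lists_length_eq[of "UNIV :: 'n set" m] by simp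
  have "\<bar>pdl is f y\<bar> \<le> (\<Sum>is'\<in>{is' :: 'n list. length is' = length is}. \<bar>pdl is' f y\<bar>)"
    by (rule member_le_sum) (auto intro: fin)
  also have "\<dots> \<le> (\<Sum>m\<le>j. \<Sum>is'\<in>{is' :: 'n list. length is' = m}. \<bar>pdl is' f y\<bar>)"
    by (rule member_le_sum[where f="\<lambda>m. \<Sum>is'\<in>{is' :: 'n list. length is' = m}. \<bar>pdl is' f y\<bar>"])
       (use assms in \<open>auto intro: sum_nonneg\<close>)
  finally show ?thesis by (simp add: bracket_def)
qed

lemma one_plus_power_le: "0 \<le> (x::real) \<Longrightarrow> (1 + x) ^ n \<le> 2 ^ n * (1 + x ^ n)"
proof (cases "x \<le> 1")
  case True
  assume "0 \<le> x"
  then have "(1 + x) ^ n \<le> 2 ^ n" using True by (intro power_mono) auto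
  then show ?thesis using \<open>0 \<le> x\<close> by (simp add: order_trans[OF _ mult_le_cancel_left1[THEN iffD2]])
next
  case False
  then have "(1 + x) ^ n \<le> (2 * x) ^ n" by (intro power_mono) auto
  then show ?thesis by (simp add: power_mult_distrib order_trans[OF _ mult_left_mono])
qed

lemma le_decay_of_weighted_bounds:
  fixes b r :: real
  assumes "0 \<le> b" "0 \<le> r" "b \<le> B0" "r ^ n * b \<le> Bn"
  shows "b \<le> 2 ^ n * (B0 + Bn) * (1 + r) powr -real n"
proof -
  have "(1 + r) ^ n * b \<le> (2 ^ n * (1 + r ^ n)) * b"
    using assms by (intro mult_right_mono one_plus_power_le) auto
  also have "\<dots> = 2 ^ n * (b + r ^ n * b)"
    by (simp add: algebra_simps)
  also have "\<dots> \<le> 2 ^ n * (B0 + Bn)"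
    using assms by simp
  finally have "(1 + r) ^ n * b \<le> 2 ^ n * (B0 + Bn)" .
  moreover have "0 < (1 + r) ^ n" using assms(2) by simp
  ultimately show ?thesis
    using assms(2) by (simp add: powr_minus_divide powr_realpow field_simps)
qed

lemma S_k_imp_C2_decay:
  fixes G :: "real \<Rightarrow> real^'n::finite \<Rightarrow> real"
  assumes "G \<in> S_k T 2"
  obtains B where "\<And>s. s \<in> {0..T} \<Longrightarrow> C2_decay B (real n) (G s)"
proof -
  from assms have cont: "continuous_on ({0..} \<times> UNIV) (\<lambda>(s, u). G s u)"
    and diff: "\<And>is i s u. length is < 2 \<Longrightarrow> 0 \<le> s \<Longrightarrow> (\<lambda>t. pdl is (G s) (u + t *\<^sub>R axis i 1)) differentiable (at 0)"
    and bdd: "\<And>r j. j \<le> 2 \<Longrightarrow> bdd_above ((\<lambda>(s, u). norm u ^ r * bracket j (G s) u) ` ({0..T} \<times> UNIV))"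
    unfolding S_k_def by auto
  obtain B0 where B0: "\<And>s u. s \<in> {0..T} \<Longrightarrow> norm u ^ 0 * bracket 2 (G s) u \<le> B0"
    using bdd[of 2 0] unfolding bdd_above_def by fastforce
  obtain Bn where Bn: "\<And>s u. s \<in> {0..T} \<Longrightarrow> norm u ^ n * bracket 2 (G s) u \<le> Bn"
    using bdd[of 2 n] unfolding bdd_above_def by fastforce
  have decay: "bracket 2 (G s) y \<le> 2 ^ n * (B0 + Bn) * (1 + norm y) powr -real n"
    if "s \<in> {0..T}" for s y
    using B0[OF that, of y] Bn[OF that, of y]
    by (intro le_decay_of_weighted_bounds) (simp_all add: bracket_def sum_nonneg)
  show thesis
  proof (rule that, unfold C2_decay_def, intro conjI allI)
    fix s assume s: "s \<in> {0..T}"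
    show "continuous_on UNIV (G s)"
      using continuous_on_compose2[OF cont, of UNIV "\<lambda>u. (s, u)"] s
      by (auto simp: continuous_on_Pair continuous_on_const continuous_on_id)
    show "(\<lambda>t. G s (y + t *\<^sub>R axis i 1)) differentiable (at 0)" for i y
      using diff[of "[]"] s by simp
    show "(\<lambda>t. pd j (G s) (y + t *\<^sub>R axis i 1)) differentiable (at 0)" for i j y
      using diff[of "[j]"] s by simp
    show "\<bar>G s y\<bar> \<le> 2 ^ n * (B0 + Bn) * (1 + norm y) powr -real n" for y
      using bracket_ge_abs_pdl[of "[]" 2 "G s" y] decay[OF s, of y] by simp
    show "\<bar>pd i (G s) y\<bar> \<le> 2 ^ n * (B0 + Bn) * (1 + norm y) powr -real n" for i y
      using bracket_ge_abs_pdl[of "[i]" 2 "G s" y] decay[OF s, of y] by simp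
    show "\<bar>pd i (pd j (G s)) y\<bar> \<le> 2 ^ n * (B0 + Bn) * (1 + norm y) powr -real n" for i j y
      using bracket_ge_abs_pdl[of "[i, j]" 2 "G s" y] decay[OF s, of y] by simp
  qed
qed

lemma S_gamma_0_split:
  fixes G :: "real \<Rightarrow> real^'n::finite \<Rightarrow> real"
  assumes "G \<in> S_gamma_0 T \<gamma> k"
  obtains Gm Gp B where "0 \<le> B"
    and "\<And>s. s \<in> {0..T} \<Longrightarrow> C2_decay B (real n) (Gm s) \<and> C2_decay B (real n) (Gp s)"
    and "\<And>s u. s \<in> {0..T} \<Longrightarrow> G s u = (if u$k < 0 then Gm s u else Gp s u)"
proof -
  obtain Gm Gp where G: "Gm \<in> S_gamma T \<gamma>" "Gp \<in> S_gamma T \<gamma>"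
    "\<And>s u. s \<in> {0..T} \<Longrightarrow> G s u = (if u$k < 0 then Gm s u else Gp s u)"
    using assms unfolding S_gamma_0_def by blast
  have "S_gamma T \<gamma> \<subseteq> (S_k T 2 :: (real \<Rightarrow> real^'n \<Rightarrow> real) set)"
    unfolding S_gamma_def S_k_c_def by simp
  then obtain Bm Bp where Bm: "\<And>s. s \<in> {0..T} \<Longrightarrow> C2_decay Bm (real n) (Gm s)"
    and Bp: "\<And>s. s \<in> {0..T} \<Longrightarrow> C2_decay Bp (real n) (Gp s)"
    using S_k_imp_C2_decay G(1,2) by (metis subsetD)
  show thesis
  proof (rule that[of "max 0 (max Bm Bp)" Gm Gp])
    show "C2_decay (max 0 (max Bm Bp)) (real n) (Gm s) \<and> C2_decay (max 0 (max Bm Bp)) (real n) (Gp s)"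
      if "s \<in> {0..T}" for s
      using C2_decay_mono[OF Bm[OF that]] C2_decay_mono[OF Bp[OF that]] by simp
  qed (use G(3) in simp_all)
qed

lemma abs_reg_frac_lap_half_space_le:
  fixes g G :: "real^'n::finite \<Rightarrow> real"
  assumes "C2_decay B N g" "2 * real CARD('n) + 1 + \<gamma> \<le> N" "0 < \<gamma>" "\<gamma> < 2"
    and "\<sigma> = 1 \<or> \<sigma> = -1" "0 < \<sigma> * u$k" and "\<And>v. 0 < \<sigma> * v$k \<Longrightarrow> G v = g v"
  shows "\<bar>reg_frac_lap \<gamma> {v. 0 < \<sigma> * v$k} G u\<bar> \<le> \<bar>c_gamma \<gamma> TYPE('n)\<bar> * half_space_const B N \<gamma> TYPE('n)
      * (1 + norm u) powr -(real CARD('n) + \<gamma>) * (1 + \<bar>u$k\<bar> powr (-\<gamma>/2))"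
proof -
  interpret half_space_pv g B N \<gamma> \<sigma> k u
    using assms by unfold_locales
  show ?thesis
    using abs_reg_frac_lap_le assms(7) by (simp add: half_def \<alpha>_def)
qed

lemma star_frac_lap_eq_half_space:
  "u$k \<noteq> 0 \<Longrightarrow> star_frac_lap \<gamma> k g u = reg_frac_lap \<gamma> {v. 0 < sgn (u$k) * v$k} g u"
  by (cases "0 < u$k") (auto simp: star_frac_lap_def reg_frac_lap_def)

lemma star_frac_lap_bound:
  fixes G :: "real \<Rightarrow> real^'n::finite \<Rightarrow> real"
  assumes "0 < \<gamma>" "\<gamma> < 2" "G \<in> S_gamma_0 T \<gamma> k"
  obtains K where "0 \<le> K" and "\<And>s u. s \<in> {0..T} \<Longrightarrow>
    \<bar>star_frac_lap \<gamma> k (G s) u\<bar> \<le> K * ((1 + norm u) powr -(real CARD('n) + \<gamma>) * (1 + \<bar>u$k\<bar> powr (-\<gamma>/2)))"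
proof -
  define n where "n = 2 * CARD('n) + 3"
  obtain Gm Gp B where "0 \<le> B"
    and C2: "\<And>s. s \<in> {0..T} \<Longrightarrow> C2_decay B (real n) (Gm s) \<and> C2_decay B (real n) (Gp s)"
    and G: "\<And>s u. s \<in> {0..T} \<Longrightarrow> G s u = (if u$k < 0 then Gm s u else Gp s u)"
    by (rule S_gamma_0_split[OF assms(3), of n]) blast
  define K where "K = \<bar>c_gamma \<gamma> TYPE('n)\<bar> * half_space_const B (real n) \<gamma> TYPE('n)"
  have "0 \<le> K" using \<open>0 \<le> B\<close> by (simp add: K_def half_space_const_nonneg)
  have N: "2 * real CARD('n) + 1 + \<gamma> \<le> real n" using assms by (simp add: n_def)
  have "\<bar>star_frac_lap \<gamma> k (G s) u\<bar>
      \<le> K * ((1 + norm u) powr -(real CARD('n) + \<gamma>) * (1 + \<bar>u$k\<bar> powr (-\<gamma>/2)))"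
    if s: "s \<in> {0..T}" for s u
  proof (cases "u$k = 0")
    case True
    then show ?thesis using \<open>0 \<le> K\<close> by (simp add: star_frac_lap_def reg_frac_lap_def)
  next
    case False
    let ?g = "if u$k < 0 then Gm s else Gp s"
    have "C2_decay B (real n) ?g" using C2[OF s] by simp
    moreover have "G s v = ?g v" if "0 < sgn (u$k) * v$k" for v
      using that G[OF s] False by (auto simp: sgn_if split: if_splits)
    ultimately show ?thesis
      using False N assms(1,2) unfolding star_frac_lap_eq_half_space[OF False] K_def mult.assoc[symmetric]
      by (intro abs_reg_frac_lap_half_space_le) (auto simp: sgn_if)
  qed
  with \<open>0 \<le> K\<close> show thesis by (rule that)
qed

section \<open>An integrable majorant\<close>

definition prod_weight :: "real \<Rightarrow> 'n \<Rightarrow> real^'n::finite \<Rightarrow> real" where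
  "prod_weight \<gamma> k u = (\<Prod>i\<in>UNIV. (1 + \<bar>u$i\<bar>) powr -((real CARD('n) + \<gamma>) / real CARD('n)))
     * (1 + \<bar>u$k\<bar> powr (-\<gamma>/2))"

lemma prod_weight_nonneg: "0 \<le> prod_weight \<gamma> k u"
  by (simp add: prod_weight_def prod_nonneg add_nonneg_nonneg)

lemma integrable_prod_weight:
  assumes "0 < \<gamma>" "\<gamma> < 2"
  shows "integrable lborel (prod_weight \<gamma> k :: real^'n::finite \<Rightarrow> real)"
proof -
  define q where "q = (real CARD('n) + \<gamma>) / real CARD('n)"
  have q: "1 < q" using assms by (simp add: q_def)
  define f where "f i = (\<lambda>x. (1 + \<bar>x\<bar>) powr -q * (if i = k then 1 + \<bar>x\<bar> powr (-\<gamma>/2) else 1))" for i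
  have "integrable lborel (f i)" for i
    using integrable_one_plus_abs_powr[OF q] integrable_one_plus_abs_powr_mult[OF q, of "\<gamma>/2"] assms
    by (cases "i = k") (simp_all add: f_def)
  then have "integrable lborel (\<lambda>u::real^'n. \<Prod>i\<in>UNIV. f i (u$i))"
    by (rule integrable_prod_components)
  moreover have "(\<Prod>i\<in>UNIV. f i (u$i)) = prod_weight \<gamma> k u" for u :: "real^'n"
    unfolding f_def prod_weight_def q_def prod.distrib by (simp add: prod.delta)
  ultimately show ?thesis by simp
qed

lemma radial_weight_le_prod_weight:
  fixes u :: "real^'n::finite"
  assumes "0 \<le> \<gamma>"
  shows "(1 + norm u) powr -(real CARD('n) + \<gamma>) * (1 + \<bar>u$k\<bar> powr (-\<gamma>/2)) \<le> prod_weight \<gamma> k u"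
  unfolding prod_weight_def
proof (rule mult_right_mono)
  show "(1 + norm u) powr -(real CARD('n) + \<gamma>)
      \<le> (\<Prod>i\<in>UNIV. (1 + \<bar>u$i\<bar>) powr -((real CARD('n) + \<gamma>) / real CARD('n)))"
    using assms by (intro plus_norm_powr_le_prod_components) (auto simp: add_pos_nonneg)
qed (simp add: add_nonneg_nonneg)

lemma prod_weight_le:
  assumes "0 \<le> \<gamma>"
  shows "prod_weight \<gamma> k u \<le> 1 + \<bar>u$k\<bar> powr (-\<gamma>/2)"
proof -
  have "(\<Prod>i\<in>UNIV. (1 + \<bar>u$i\<bar>) powr -((real CARD('n) + \<gamma>) / real CARD('n))) \<le> 1"
    using assms by (intro prod_le_1) (auto simp: one_plus_abs_powr_neg_le_1)
  then show ?thesis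
    unfolding prod_weight_def by (intro mult_left_le_one_le) (auto simp: prod_nonneg)
qed

theorem mainTheorem11:
  fixes T \<gamma> :: real and k :: "'n::finite" and G :: "real \<Rightarrow> real^'n \<Rightarrow> real"
  assumes "T > 0" and "0 < \<gamma>" and "\<gamma> < 2"
    and "G \<in> S_gamma_0 T \<gamma> k"
  shows "\<exists>H :: real^'n \<Rightarrow> real. \<exists>C > 0. integrable lborel H \<and>
           (\<forall>u. \<forall>s\<in>{0..T}. \<bar>star_frac_lap \<gamma> k (G s) u\<bar> \<le> H u) \<and>
           (\<forall>u. u $ k \<noteq> 0 \<longrightarrow> H u \<le> C * (1 + \<bar>u $ k\<bar> powr (- \<gamma> / 2)))"
proof -
  obtain K where "0 \<le> K" and K: "\<And>s u. s \<in> {0..T} \<Longrightarrow> \<bar>star_frac_lap \<gamma> k (G s) u\<bar>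
      \<le> K * ((1 + norm u) powr -(real CARD('n) + \<gamma>) * (1 + \<bar>u$k\<bar> powr (-\<gamma>/2)))"
    using star_frac_lap_bound[OF assms(2-4)] by blast
  define H where "H u = K * prod_weight \<gamma> k u" for u :: "real^'n"
  have "integrable lborel H"
    unfolding H_def by (intro integrable_mult_right integrable_prod_weight assms(2,3))
  moreover have "\<bar>star_frac_lap \<gamma> k (G s) u\<bar> \<le> H u" if "s \<in> {0..T}" for s u
    using K[OF that] mult_left_mono[OF radial_weight_le_prod_weight \<open>0 \<le> K\<close>] assms(2)
    unfolding H_def by (meson less_imp_le order_trans)
  moreover have "H u \<le> (K + 1) * (1 + \<bar>u$k\<bar> powr (-\<gamma>/2))" for u
    using prod_weight_le[of \<gamma> k u] prod_weight_nonneg[of \<gamma> k u] \<open>0 \<le> K\<close> assms(2)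
    unfolding H_def by (intro mult_mono) auto
  ultimately show ?thesis
    using \<open>0 \<le> K\<close> by (intro exI[of _ H] exI[of _ "K + 1"]) auto
qed

end
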